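(* Let $A$ be a finite alphabet. If $\phi: A^{\mathbb{N}} \to A^{\mathbb{N}}$ $*$-commutes with the shift map $\sigma$, then $Z_k^{\phi}$ is shift invariant, i.e. $\sigma(Z_k^{\phi})=Z_k^{\phi}$, for all $k \in \mathbb{N}$.
   Context: $A$ is a finite set; $\mathbb{N}=\{1,2,3,\dots\}$; $A^{\mathbb{N}}$ is the set of one-sided infinite sequences over $A$; $\sigma(x_1x_2x_3\cdots)=x_2x_3\cdots$. Two functions $S,T: X\to X$ $*$-commute if $ST=TS$ and for every $(y,z)\in X\times X$ with $S(y)=T(z)$ there exists a unique $x\in X$ with $T(x)=y$ and $S(x)=z$. For $\phi: X\to X$ and $k\in\mathbb{N}$, $Z_k^{\phi}=\{y\in X : |\phi^{-1}(y)|=k\}$. *)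

theory Defs
  imports Main
begin

text \<open>One-sided sequences over A are modelled as functions nat \<Rightarrow> 'a
  (index 0 plays the role of index 1). The shift drops the first symbol.\<close>
definition shift :: "(nat \<Rightarrow> 'a) \<Rightarrow> (nat \<Rightarrow> 'a)" where
  "shift x = (\<lambda>n. x (Suc n))"

definition star_commute :: "('b \<Rightarrow> 'b) \<Rightarrow> ('b \<Rightarrow> 'b) \<Rightarrow> bool" where
  "star_commute S T \<longleftrightarrow> S \<circ> T = T \<circ> S \<and>
     (\<forall>y z. S y = T z \<longrightarrow> (\<exists>!x. T x = y \<and> S x = z))"

definition Z :: "nat \<Rightarrow> ('b \<Rightarrow> 'b) \<Rightarrow> 'b set" where
  "Z k \<phi> = {y. finite (\<phi> -` {y}) \<and> card (\<phi> -` {y}) = k}"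

end

theory Submission
  imports Defs
begin

text \<open>If \<open>S\<close> and \<open>T\<close> \<open>*\<close>-commute, then \<open>T\<close> maps the fibre of \<open>S\<close> over \<open>y\<close> bijectively
  onto the fibre over \<open>T y\<close>; so \<open>y\<close> and \<open>T y\<close> have the same number of \<open>S\<close>-preimages.
  For the shift, which is surjective, this makes each \<open>Z\<^sub>k\<close> equal to its own image.\<close>

lemma star_commute_bij_betw_fibres:
  assumes "star_commute S T"
  shows "bij_betw T (S -` {y}) (S -` {T y})"
proof -
  have comm: "S (T x) = T (S x)" for x
    using assms unfolding star_commute_def by (metis comp_apply)
  have unique_lift: "\<exists>!x. T x = u \<and> S x = v" if "S u = T v" for u v
    using assms that unfolding star_commute_def by blast
  show ?thesis unfolding bij_betw_def
  proof
    show "inj_on T (S -` {y})"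
    proof (rule inj_onI)
      fix x x' assume "x \<in> S -` {y}" "x' \<in> S -` {y}" "T x = T x'"
      moreover have "S (T x) = T y" using comm \<open>x \<in> S -` {y}\<close> by simp
      ultimately show "x = x'" using unique_lift[of "T x" y] by auto
    qed
    show "T ` S -` {y} = S -` {T y}"
    proof
      show "T ` S -` {y} \<subseteq> S -` {T y}" using comm by auto
      show "S -` {T y} \<subseteq> T ` S -` {y}"
      proof
        fix u assume "u \<in> S -` {T y}"
        then obtain x where "T x = u" "S x = y" using unique_lift[of u y] by auto
        then show "u \<in> T ` S -` {y}" by auto
      qed
    qed
  qed
qed

lemma star_commute_vimage_Z:
  assumes "star_commute S T"
  shows "T -` Z k S = Z k S"
proof -
  have "y \<in> Z k S \<longleftrightarrow> T y \<in> Z k S" for y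
    using bij_betw_finite[OF star_commute_bij_betw_fibres[OF assms]]
      bij_betw_same_card[OF star_commute_bij_betw_fibres[OF assms]]
    unfolding Z_def by simp
  then show ?thesis by auto
qed

lemma surj_shift: "surj shift"
proof (rule surjI)
  fix z :: "nat \<Rightarrow> 'a"
  show "shift (\<lambda>n. case n of 0 \<Rightarrow> z 0 | Suc m \<Rightarrow> z m) = z"
    unfolding shift_def by simp
qed

theorem proposition5p4:
  fixes \<phi> :: "(nat \<Rightarrow> 'a::finite) \<Rightarrow> (nat \<Rightarrow> 'a)"
  assumes "star_commute \<phi> shift"
    and "k \<ge> 1"
  shows "shift ` Z k \<phi> = Z k \<phi>"
proof -
  have "shift ` Z k \<phi> = shift ` (shift -` Z k \<phi>)"
    by (simp add: star_commute_vimage_Z[OF assms(1)])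
  also have "\<dots> = Z k \<phi>"
    by (rule surj_image_vimage_eq[OF surj_shift])
  finally show ?thesis .
qed

end
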